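(* Consider a mean-variance team stochastic game as described in the context and a joint policy $\boldsymbol{\mu}^*\in\mathcal{U}$. Then $\boldsymbol{\mu}^*$ is a strict local Nash equilibrium if and only if it is a strict local maximum of $J$, i.e. there exists $\bar\delta\in(0,1]$ such that for all $\delta\in(0,\bar\delta]$ and all $\boldsymbol{\mu}=(\mu_1,\dots,\mu_N)\in\mathcal{U}$ with $\boldsymbol{\mu}\neq\boldsymbol{\mu}^*$, $$J(\boldsymbol{\mu}^* )>J\big((1-\delta)\mu_1^*+\delta\mu_1,\dots,(1-\delta)\mu_N^*+\delta\mu_N\big).$$
   Context: Game: finite agents $\mathcal{N}=\{1,\dots,N\}$, finite state space $\mathcal{S}$, finite action sets $\mathcal{A}_i$, $\mathcal{A}=\prod_i\mathcal{A}_i$, transition kernel $P(s'|s,\boldsymbol{a})$, common reward $r:\mathcal{S}\times\mathcal{A}\to\mathbb{R}$. Policies $\mu_i:\mathcal{S}\to\Delta(\mathcal{A}_i)$ (set $\mathcal{U}_i$); joint policies $\boldsymbol{\mu}\in\mathcal{U}=\prod_i\mathcal{U}_i$ with $\boldsymbol{\mu}(\boldsymbol{a}|s)=\prod_i\mu_i(a_i|s)$; $(\mu_i,\boldsymbol{\mu}_{-i})$ means agent $i$ uses $\mu_i$, others use $\boldsymbol{\mu}_{-i}$; $(1-\delta)\mu^*_i+\delta\mu_i$ is the policy $s\mapsto(1-\delta)\mu^*_i(\cdot|s)+\delta\mu_i(\cdot|s)$. Standing assumption: the chain $P^{\boldsymbol{\mu}}(s'|s)=\sum_{\boldsymbol{a}}\boldsymbol{\mu}(\boldsymbol{a}|s)P(s'|s,\boldsymbol{a})$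 is ergodic for every $\boldsymbol{\mu}\in\mathcal{U}$, stationary distribution $\pi^{\boldsymbol{\mu}}$. $\eta(\boldsymbol{\mu})=\sum_s\pi^{\boldsymbol{\mu}}(s)\sum_{\boldsymbol{a}}\boldsymbol{\mu}(\boldsymbol{a}|s)r(s,\boldsymbol{a})$; $\zeta(\boldsymbol{\mu})=\sum_s\pi^{\boldsymbol{\mu}}(s)\sum_{\boldsymbol{a}}\boldsymbol{\mu}(\boldsymbol{a}|s)(r(s,\boldsymbol{a})-\eta(\boldsymbol{\mu}))^2$; for fixed $\beta\ge0$, $J(\boldsymbol{\mu})=\eta(\boldsymbol{\mu})-\beta\zeta(\boldsymbol{\mu})$. A joint policy $\boldsymbol{\mu}^*$ is a strict local Nash equilibrium if there is $\bar\delta\in(0,1]$ such that for all $\delta\in(0,\bar\delta]$, all $i\in\mathcal{N}$ and all $\mu_i\in\mathcal{U}_i$ with $\mu_i\neq\mu_i^*$: $J(\mu_i^*,\boldsymbol{\mu}^*_{-i})>J((1-\delta)\mu_i^*+\delta\mu_i,\boldsymbol{\mu}^*_{-i})$. *)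

theory Defs
  imports Main "HOL-Library.FuncSet" Complex_Main
begin

text \<open>
  Agent i has a finite nonempty action set A i (a subset of a type 'a);
  joint actions are the functions in PiE UNIV A.
  Transition kernel P s a s', common reward r s a.
  A policy of agent i is m :: 's => 'a => real, a probability distribution
  on A i at every state (and 0 outside A i, so that equality of policies
  is equality of functions).
\<close>

definition joint_actions :: "('i \<Rightarrow> 'a set) \<Rightarrow> ('i \<Rightarrow> 'a) set" where
  "joint_actions A = PiE UNIV A"

definition valid_game ::
  "('i::finite \<Rightarrow> 'a set) \<Rightarrow> ('s::finite \<Rightarrow> ('i \<Rightarrow> 'a) \<Rightarrow> 's \<Rightarrow> real) \<Rightarrow> bool" where
  "valid_game A P \<longleftrightarrow>
     (\<forall>i. finite (A i) \<and> A i \<noteq> {}) \<and>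
     (\<forall>s a s'. a \<in> joint_actions A \<longrightarrow> P s a s' \<ge> 0) \<and>
     (\<forall>s a. a \<in> joint_actions A \<longrightarrow> (\<Sum>s'\<in>UNIV. P s a s') = 1)"

definition is_policy :: "'a set \<Rightarrow> ('s \<Rightarrow> 'a \<Rightarrow> real) \<Rightarrow> bool" where
  "is_policy Ai m \<longleftrightarrow>
     (\<forall>s a. m s a \<ge> 0) \<and> (\<forall>s. (\<Sum>a\<in>Ai. m s a) = 1) \<and>
     (\<forall>s a. a \<notin> Ai \<longrightarrow> m s a = 0)"

definition is_joint_policy :: "('i \<Rightarrow> 'a set) \<Rightarrow> ('i \<Rightarrow> 's \<Rightarrow> 'a \<Rightarrow> real) \<Rightarrow> bool" where
  "is_joint_policy A mu \<longleftrightarrow> (\<forall>i. is_policy (A i) (mu i))"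

definition joint_prob :: "('i::finite \<Rightarrow> 's \<Rightarrow> 'a \<Rightarrow> real) \<Rightarrow> 's \<Rightarrow> ('i \<Rightarrow> 'a) \<Rightarrow> real" where
  "joint_prob mu s a = (\<Prod>i\<in>UNIV. mu i s (a i))"

definition chain ::
  "('i::finite \<Rightarrow> 'a set) \<Rightarrow> ('s \<Rightarrow> ('i \<Rightarrow> 'a) \<Rightarrow> 's \<Rightarrow> real) \<Rightarrow>
   ('i \<Rightarrow> 's \<Rightarrow> 'a \<Rightarrow> real) \<Rightarrow> 's \<Rightarrow> 's \<Rightarrow> real" where
  "chain A P mu s s' = (\<Sum>a\<in>joint_actions A. joint_prob mu s a * P s a s')"

fun nstep :: "('s::finite \<Rightarrow> 's \<Rightarrow> real) \<Rightarrow> nat \<Rightarrow> 's \<Rightarrow> 's \<Rightarrow> real" where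
  "nstep Q 0 s s' = (if s = s' then 1 else 0)"
| "nstep Q (Suc n) s s' = (\<Sum>t\<in>UNIV. nstep Q n s t * Q t s')"

definition irreducible_chain :: "('s::finite \<Rightarrow> 's \<Rightarrow> real) \<Rightarrow> bool" where
  "irreducible_chain Q \<longleftrightarrow> (\<forall>s s'. \<exists>n. nstep Q n s s' > 0)"

definition aperiodic_chain :: "('s::finite \<Rightarrow> 's \<Rightarrow> real) \<Rightarrow> bool" where
  "aperiodic_chain Q \<longleftrightarrow> (\<forall>s. Gcd {n. n > 0 \<and> nstep Q n s s > 0} = 1)"

definition ergodic_chain :: "('s::finite \<Rightarrow> 's \<Rightarrow> real) \<Rightarrow> bool" where
  "ergodic_chain Q \<longleftrightarrow> irreducible_chain Q \<and> aperiodic_chain Q"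

definition is_stationary :: "('s::finite \<Rightarrow> 's \<Rightarrow> real) \<Rightarrow> ('s \<Rightarrow> real) \<Rightarrow> bool" where
  "is_stationary Q p \<longleftrightarrow> (\<forall>s. p s \<ge> 0) \<and> (\<Sum>s\<in>UNIV. p s) = 1 \<and>
     (\<forall>s'. p s' = (\<Sum>s\<in>UNIV. p s * Q s s'))"

text \<open>The (unique, under ergodicity) stationary distribution pi^mu.\<close>
definition stat_dist ::
  "('i::finite \<Rightarrow> 'a set) \<Rightarrow> ('s::finite \<Rightarrow> ('i \<Rightarrow> 'a) \<Rightarrow> 's \<Rightarrow> real) \<Rightarrow>
   ('i \<Rightarrow> 's \<Rightarrow> 'a \<Rightarrow> real) \<Rightarrow> 's \<Rightarrow> real" where
  "stat_dist A P mu = (THE p. is_stationary (chain A P mu) p)"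

definition eta ::
  "('i::finite \<Rightarrow> 'a set) \<Rightarrow> ('s::finite \<Rightarrow> ('i \<Rightarrow> 'a) \<Rightarrow> 's \<Rightarrow> real) \<Rightarrow>
   ('s \<Rightarrow> ('i \<Rightarrow> 'a) \<Rightarrow> real) \<Rightarrow> ('i \<Rightarrow> 's \<Rightarrow> 'a \<Rightarrow> real) \<Rightarrow> real" where
  "eta A P r mu = (\<Sum>s\<in>UNIV. stat_dist A P mu s *
       (\<Sum>a\<in>joint_actions A. joint_prob mu s a * r s a))"

definition zeta ::
  "('i::finite \<Rightarrow> 'a set) \<Rightarrow> ('s::finite \<Rightarrow> ('i \<Rightarrow> 'a) \<Rightarrow> 's \<Rightarrow> real) \<Rightarrow>
   ('s \<Rightarrow> ('i \<Rightarrow> 'a) \<Rightarrow> real) \<Rightarrow> ('i \<Rightarrow> 's \<Rightarrow> 'a \<Rightarrow> real) \<Rightarrow> real" where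
  "zeta A P r mu = (\<Sum>s\<in>UNIV. stat_dist A P mu s *
       (\<Sum>a\<in>joint_actions A. joint_prob mu s a * (r s a - eta A P r mu)^2))"

definition Jmv ::
  "('i::finite \<Rightarrow> 'a set) \<Rightarrow> ('s::finite \<Rightarrow> ('i \<Rightarrow> 'a) \<Rightarrow> 's \<Rightarrow> real) \<Rightarrow>
   ('s \<Rightarrow> ('i \<Rightarrow> 'a) \<Rightarrow> real) \<Rightarrow> real \<Rightarrow> ('i \<Rightarrow> 's \<Rightarrow> 'a \<Rightarrow> real) \<Rightarrow> real" where
  "Jmv A P r beta mu = eta A P r mu - beta * zeta A P r mu"

definition mix :: "real \<Rightarrow> ('s \<Rightarrow> 'a \<Rightarrow> real) \<Rightarrow> ('s \<Rightarrow> 'a \<Rightarrow> real) \<Rightarrow> 's \<Rightarrow> 'a \<Rightarrow> real" where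
  "mix d mstar m = (\<lambda>s a. (1 - d) * mstar s a + d * m s a)"

definition strict_local_NE ::
  "('i::finite \<Rightarrow> 'a set) \<Rightarrow> ('s::finite \<Rightarrow> ('i \<Rightarrow> 'a) \<Rightarrow> 's \<Rightarrow> real) \<Rightarrow>
   ('s \<Rightarrow> ('i \<Rightarrow> 'a) \<Rightarrow> real) \<Rightarrow> real \<Rightarrow> ('i \<Rightarrow> 's \<Rightarrow> 'a \<Rightarrow> real) \<Rightarrow> bool" where
  "strict_local_NE A P r beta mustar \<longleftrightarrow>
     (\<exists>db. 0 < db \<and> db \<le> 1 \<and>
        (\<forall>d. 0 < d \<and> d \<le> db \<longrightarrow>
          (\<forall>i m. is_policy (A i) m \<and> m \<noteq> mustar i \<longrightarrow>
             Jmv A P r beta mustar > Jmv A P r beta (mustar(i := mix d (mustar i) m)))))"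

definition strict_local_max ::
  "('i::finite \<Rightarrow> 'a set) \<Rightarrow> ('s::finite \<Rightarrow> ('i \<Rightarrow> 'a) \<Rightarrow> 's \<Rightarrow> real) \<Rightarrow>
   ('s \<Rightarrow> ('i \<Rightarrow> 'a) \<Rightarrow> real) \<Rightarrow> real \<Rightarrow> ('i \<Rightarrow> 's \<Rightarrow> 'a \<Rightarrow> real) \<Rightarrow> bool" where
  "strict_local_max A P r beta mustar \<longleftrightarrow>
     (\<exists>db. 0 < db \<and> db \<le> 1 \<and>
        (\<forall>d. 0 < d \<and> d \<le> db \<longrightarrow>
          (\<forall>mu. is_joint_policy A mu \<and> mu \<noteq> mustar \<longrightarrow>
             Jmv A P r beta mustar > Jmv A P r beta (\<lambda>i. mix d (mustar i) (mu i)))))"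

end

theory Submission
  imports Defs "HOL-Analysis.Analysis"
begin

text \<open>A strict local maximum is a strict local Nash equilibrium because unilateral mixtures are
  special joint mixtures. Conversely, by the performance difference lemma (with the relative value
  function of \<open>\<mu>\<^sup>*\<close> from the Poisson equation), \<open>J(\<mu>) - J(\<mu>\<^sup>*)\<close> is a \<open>\<pi>\<^sup>\<mu>\<close>-average of
  advantages of an action-value function \<open>q\<^sub>g\<close> of \<open>\<mu>\<^sup>*\<close>, plus \<open>\<beta>\<close> times the square of such an
  average for \<open>q\<^sub>r\<close>. Deviations of a single agent at a single state then show that a strict local
  Nash equilibrium is deterministic and that every unilateral change of action decreases \<open>q\<^sub>g\<close> by
  at least some \<open>-c > 0\<close>. Under a joint mixture with weight \<open>\<delta>\<close>, two or more agents deviate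
  simultaneously only with probability \<open>O(\<delta>\<^sup>2)\<close>, so the advantage is at most \<open>c \<delta> D + O(\<delta>\<^sup>2 D)\<close>
  with \<open>D\<close> the total deviation mass, and \<open>J\<close> decreases for all \<open>\<delta>\<close> below a uniform threshold.\<close>

section \<open>Finite Markov chains\<close>

definition invariant_vector :: "('s::finite \<Rightarrow> 's \<Rightarrow> real) \<Rightarrow> ('s \<Rightarrow> real) \<Rightarrow> bool" where
  "invariant_vector Q y \<longleftrightarrow> (\<forall>s'. y s' = (\<Sum>s\<in>UNIV. y s * Q s s'))"

lemma invariant_vectorD: "invariant_vector Q y \<Longrightarrow> (\<Sum>s\<in>UNIV. y s * Q s t) = y t"
  unfolding invariant_vector_def by metis

lemma invariant_vector_diff:
  assumes "invariant_vector Q p" "invariant_vector Q q"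
  shows "invariant_vector Q (\<lambda>s. p s - q s)"
  unfolding invariant_vector_def
proof
  fix t
  have "p t - q t = (\<Sum>s\<in>UNIV. p s * Q s t) - (\<Sum>s\<in>UNIV. q s * Q s t)"
    using assms by (simp add: invariant_vectorD)
  then show "p t - q t = (\<Sum>s\<in>UNIV. (p s - q s) * Q s t)"
    by (simp add: left_diff_distrib sum_subtractf)
qed

lemma invariant_vector_scale:
  assumes "invariant_vector Q p"
  shows "invariant_vector Q (\<lambda>s. c * p s)"
  unfolding invariant_vector_def
proof
  fix t
  have "c * p t = c * (\<Sum>s\<in>UNIV. p s * Q s t)"
    using assms by (simp add: invariant_vectorD)
  then show "c * p t = (\<Sum>s\<in>UNIV. c * p s * Q s t)"
    by (simp add: sum_distrib_left mult.assoc)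
qed

lemma stationary_imp_invariant_vector: "is_stationary Q p \<Longrightarrow> invariant_vector Q p"
  unfolding is_stationary_def invariant_vector_def by blast

lemma stationary_nonneg: "is_stationary Q p \<Longrightarrow> 0 \<le> p s"
  unfolding is_stationary_def by blast

lemma stationary_sum_eq_1: "is_stationary Q p \<Longrightarrow> (\<Sum>s\<in>UNIV. p s) = 1"
  unfolding is_stationary_def by blast

lemma stationary_expectation_step:
  assumes "is_stationary Q p"
  shows "(\<Sum>s\<in>UNIV. p s * (\<Sum>t\<in>UNIV. Q s t * x t)) = (\<Sum>t\<in>UNIV. p t * x t)"
proof -
  have "(\<Sum>s\<in>UNIV. p s * (\<Sum>t\<in>UNIV. Q s t * x t)) = (\<Sum>t\<in>UNIV. (\<Sum>s\<in>UNIV. p s * Q s t) * x t)"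
    by (simp add: sum_distrib_left sum_distrib_right mult.assoc) (rule sum.swap)
  also have "\<dots> = (\<Sum>t\<in>UNIV. p t * x t)"
    by (simp add: invariant_vectorD[OF stationary_imp_invariant_vector[OF assms]])
  finally show ?thesis .
qed

lemma sum_pos_imp_ex:
  fixes f :: "'b \<Rightarrow> 'c::linordered_ab_group_add"
  shows "0 < sum f S \<Longrightarrow> \<exists>x\<in>S. 0 < f x"
  using sum_nonpos[of S f] by (meson not_le)

locale finite_markov_chain =
  fixes Q :: "'s::finite \<Rightarrow> 's \<Rightarrow> real"
  assumes nonneg: "0 \<le> Q s t"
    and row_sum: "(\<Sum>t\<in>UNIV. Q s t) = 1"
begin

lemma nstep_nonneg: "0 \<le> nstep Q n s t"
  by (induction n arbitrary: t) (auto intro!: sum_nonneg mult_nonneg_nonneg nonneg)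

lemma nstep_pos_closed:
  assumes "S s0" and closed: "\<And>s t. S s \<Longrightarrow> Q s t > 0 \<Longrightarrow> S t"
  shows "nstep Q n s0 t > 0 \<Longrightarrow> S t"
proof (induction n arbitrary: t)
  case 0
  then show ?case using \<open>S s0\<close> by (auto split: if_splits)
next
  case (Suc n)
  then have "0 < (\<Sum>u\<in>UNIV. nstep Q n s0 u * Q u t)" by simp
  then obtain u where "0 < nstep Q n s0 u * Q u t"
    using sum_pos_imp_ex by blast
  then have "0 < nstep Q n s0 u" "0 < Q u t"
    using nstep_nonneg[of n s0 u] nonneg[of u t] by (auto simp: zero_less_mult_iff)
  then show ?case using Suc.IH closed by blast
qed

text \<open>The positive part \<open>z\<close> of an invariant vector satisfies \<open>z \<le> z Q\<close> pointwise, and \<open>z Q\<close>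
  has the same total mass as \<open>z\<close> because \<open>Q\<close> is stochastic.\<close>

lemma invariant_vector_pos_part:
  assumes inv: "invariant_vector Q y"
  shows "invariant_vector Q (\<lambda>s. max (y s) 0)"
proof -
  let ?z = "\<lambda>s. max (y s) 0"
  have le: "?z t \<le> (\<Sum>s\<in>UNIV. ?z s * Q s t)" for t
  proof -
    have "y t = (\<Sum>s\<in>UNIV. y s * Q s t)" using inv by (simp add: invariant_vectorD)
    also have "\<dots> \<le> (\<Sum>s\<in>UNIV. ?z s * Q s t)"
      by (intro sum_mono mult_right_mono nonneg max.cobounded1)
    finally show ?thesis
      by (intro max.boundedI) (auto intro!: sum_nonneg mult_nonneg_nonneg nonneg)
  qed
  have "(\<Sum>t\<in>UNIV. \<Sum>s\<in>UNIV. ?z s * Q s t) = (\<Sum>s\<in>UNIV. ?z s * (\<Sum>t\<in>UNIV. Q s t))"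
    by (subst sum.swap) (simp add: sum_distrib_left)
  also have "\<dots> = (\<Sum>s\<in>UNIV. ?z s)" by (simp add: row_sum)
  finally have "(\<Sum>t\<in>UNIV. (\<Sum>s\<in>UNIV. ?z s * Q s t) - ?z t) = 0"
    by (simp add: sum_subtractf)
  then have zero: "\<forall>t\<in>UNIV. (\<Sum>s\<in>UNIV. ?z s * Q s t) - ?z t = 0"
    by (subst (asm) sum_nonneg_eq_0_iff) (use le in auto)
  show ?thesis unfolding invariant_vector_def
  proof
    fix t
    have "(\<Sum>s\<in>UNIV. ?z s * Q s t) - ?z t = 0" using zero by blast
    then show "?z t = (\<Sum>s\<in>UNIV. ?z s * Q s t)" by linarith
  qed
qed

text \<open>\<open>I - Q\<close> kills the constant vector, so it has a nonzero left null vector \<open>y\<close>; the positive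
  part of \<open>\<plusminus>y\<close>, normalised, is a stationary distribution.\<close>

lemma stationary_exists: "\<exists>p. is_stationary Q p"
proof -
  define M :: "real^'s^'s" where "M = (\<chi> i j. (if i = j then 1 else 0) - Q i j)"
  have "M *v (\<chi> j. 1) = 0"
    unfolding M_def matrix_vector_mult_def by (simp add: vec_eq_iff sum_subtractf row_sum)
  moreover have "(\<chi> j. 1) \<noteq> (0 :: real^'s)" by (simp add: vec_eq_iff)
  ultimately have "\<not> (\<exists>B. B ** M = mat 1)" unfolding matrix_left_invertible_ker by blast
  then have "\<not> (\<exists>B. B ** transpose M = mat 1)"
    by (metis matrix_left_right_inverse matrix_transpose_mul transpose_mat transpose_transpose)
  then obtain y where "y \<noteq> 0" and "transpose M *v y = 0"
    unfolding matrix_left_invertible_ker by blast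
  then have yM: "y v* M = 0" by simp
  have inv_y: "invariant_vector Q (\<lambda>s. y $ s)"
    unfolding invariant_vector_def
  proof
    fix t
    have "(\<Sum>s\<in>UNIV. y $ s * ((if s = t then 1 else 0) - Q s t)) = 0"
      using yM unfolding M_def vector_matrix_mult_def by (simp add: vec_eq_iff)
    moreover have "y $ s * ((if s = t then 1 else 0) - Q s t) = (if s = t then y $ s else 0) - y $ s * Q s t"
      for s by (simp add: algebra_simps)
    ultimately show "y $ t = (\<Sum>s\<in>UNIV. y $ s * Q s t)"
      by (simp add: sum_subtractf)
  qed
  obtain s1 where "y $ s1 \<noteq> 0" using \<open>y \<noteq> 0\<close> by (auto simp: vec_eq_iff)
  define z where "z s = max (y $ s1 * y $ s) 0" for s
  have inv_z: "invariant_vector Q z"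
    unfolding z_def by (intro invariant_vector_pos_part invariant_vector_scale inv_y)
  have "0 < z s1" unfolding z_def using \<open>y $ s1 \<noteq> 0\<close> by (auto simp: zero_less_mult_iff linorder_neq_iff)
  also have "z s1 \<le> (\<Sum>s\<in>UNIV. z s)" by (rule member_le_sum) (simp_all add: z_def)
  finally have "0 < (\<Sum>s\<in>UNIV. z s)" .
  define p where "p s = (1 / (\<Sum>s\<in>UNIV. z s)) * z s" for s
  have "is_stationary Q p" unfolding is_stationary_def
  proof (intro conjI allI)
    show "0 \<le> p s" for s
      unfolding p_def using \<open>0 < (\<Sum>s\<in>UNIV. z s)\<close> by (simp add: z_def[of s])
    show "(\<Sum>s\<in>UNIV. p s) = 1"
      unfolding p_def using \<open>0 < (\<Sum>s\<in>UNIV. z s)\<close> by (simp add: sum_divide_distrib[symmetric])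
    show "p t = (\<Sum>s\<in>UNIV. p s * Q s t)" for t
      using invariant_vector_scale[OF inv_z] unfolding invariant_vector_def p_def by blast
  qed
  then show ?thesis by blast
qed

end

locale irreducible_markov_chain = finite_markov_chain Q for Q :: "'s::finite \<Rightarrow> 's \<Rightarrow> real" +
  assumes irreducible: "irreducible_chain Q"
begin

lemma closed_set_contains_all:
  assumes "S s0" and "\<And>s t. S s \<Longrightarrow> Q s t > 0 \<Longrightarrow> S t"
  shows "S t"
  using irreducible assms nstep_pos_closed unfolding irreducible_chain_def by metis

lemma invariant_vector_pos:
  assumes nonneg_p: "\<And>s. 0 \<le> p s" and inv: "invariant_vector Q p" and "p s0 > 0"
  shows "p t > 0"
  using \<open>p s0 > 0\<close>
proof (rule closed_set_contains_all)
  fix u v assume "p u > 0" "Q u v > 0"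
  then have "0 < p u * Q u v" by simp
  also have "p u * Q u v \<le> (\<Sum>w\<in>UNIV. p w * Q w v)"
    by (rule member_le_sum) (simp_all add: nonneg_p nonneg)
  also have "\<dots> = p v" using inv by (rule invariant_vectorD)
  finally show "p v > 0" .
qed

lemma stationary_pos:
  assumes p: "is_stationary Q p"
  shows "p s > 0"
proof -
  obtain s0 where "p s0 > 0"
    using sum_pos_imp_ex[of p UNIV] stationary_sum_eq_1[OF p] by auto
  then show ?thesis
    by (rule invariant_vector_pos[OF stationary_nonneg[OF p] stationary_imp_invariant_vector[OF p]])
qed

text \<open>If \<open>p s > q s\<close>, the positive part of \<open>p - q\<close> is a nonnegative invariant vector that is
  positive at \<open>s\<close>, hence everywhere; but \<open>p - q\<close> has total mass zero.\<close>

lemma stationary_le: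
  assumes p: "is_stationary Q p" and q: "is_stationary Q q"
  shows "p s \<le> q s"
proof (rule ccontr)
  assume "\<not> p s \<le> q s"
  let ?z = "\<lambda>t. max (p t - q t) 0"
  have "invariant_vector Q ?z"
    using p q by (intro invariant_vector_pos_part invariant_vector_diff stationary_imp_invariant_vector)
  then have "?z t > 0" for t
    using invariant_vector_pos[of ?z s t] \<open>\<not> p s \<le> q s\<close> by simp
  then have "(\<Sum>t\<in>UNIV. p t - q t) > 0"
    by (intro sum_pos) (auto simp: less_max_iff_disj)
  then show False
    using stationary_sum_eq_1[OF p] stationary_sum_eq_1[OF q] by (simp add: sum_subtractf)
qed

lemma stationary_unique: "is_stationary Q p \<Longrightarrow> is_stationary Q q \<Longrightarrow> p = q"
  by (intro ext antisym stationary_le)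

text \<open>Maximum principle: the set where a harmonic function attains its maximum is closed.\<close>

lemma harmonic_imp_constant:
  assumes harmonic: "\<And>s. h s = (\<Sum>t\<in>UNIV. Q s t * h t)"
  shows "h s = h s'"
proof -
  define M where "M = Max (range h)"
  have le_M: "h t \<le> M" for t unfolding M_def by (rule Max_ge) auto
  have "M \<in> range h" unfolding M_def by (rule Max_in) auto
  then obtain s0 where "h s0 = M" by auto
  have "h t = M" for t
    using \<open>h s0 = M\<close>
  proof (rule closed_set_contains_all)
    fix u v assume "h u = M" "Q u v > 0"
    have "(\<Sum>w\<in>UNIV. Q u w * (M - h w)) = M * (\<Sum>w\<in>UNIV. Q u w) - (\<Sum>w\<in>UNIV. Q u w * h w)"
      by (simp add: right_diff_distrib sum_subtractf sum_distrib_left mult.commute)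
    also have "\<dots> = 0" using row_sum harmonic[of u] \<open>h u = M\<close> by simp
    finally have "\<forall>w\<in>UNIV. Q u w * (M - h w) = 0"
      by (subst (asm) sum_nonneg_eq_0_iff) (auto intro: mult_nonneg_nonneg nonneg simp: le_M)
    then show "h v = M" using \<open>Q u v > 0\<close> by force
  qed
  then show ?thesis by simp
qed

text \<open>The Poisson equation \<open>h = v + Q h\<close> is solvable for every \<open>v\<close> with zero stationary mean:
  \<open>I - Q + 1 p\<^sup>T\<close> is injective, since a kernel vector \<open>x\<close> has \<open>p\<^sup>T x = 0\<close> and is therefore
  harmonic, constant and zero.\<close>

lemma poisson_equation_solvable:
  fixes p v :: "'s \<Rightarrow> real"
  assumes p: "is_stationary Q p" and v: "(\<Sum>s\<in>UNIV. p s * v s) = 0"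
  shows "\<exists>h. \<forall>s. h s = v s + (\<Sum>t\<in>UNIV. Q s t * h t)"
proof -
  define M :: "real^'s^'s" where "M = (\<chi> i j. (if i = j then 1 else 0) - Q i j + p j)"
  have Mv: "(M *v x) $ i = x $ i - (\<Sum>j\<in>UNIV. Q i j * x $ j) + (\<Sum>j\<in>UNIV. p j * x $ j)" for x i
  proof -
    have "(M *v x) $ i = (\<Sum>j\<in>UNIV. ((if i = j then 1 else 0) - Q i j + p j) * x $ j)"
      unfolding M_def matrix_vector_mult_def by simp
    also have "\<dots> = (\<Sum>j\<in>UNIV. (if i = j then x $ j else 0) - Q i j * x $ j + p j * x $ j)"
      by (rule sum.cong) (simp_all add: algebra_simps)
    finally show ?thesis by (simp add: sum.distrib sum_subtractf)
  qed
  have p_Mv: "(\<Sum>i\<in>UNIV. p i * (M *v x) $ i) = (\<Sum>j\<in>UNIV. p j * x $ j)" for x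
    unfolding Mv using stationary_expectation_step[OF p, of "\<lambda>j. x $ j"] stationary_sum_eq_1[OF p]
    by (simp add: algebra_simps sum.distrib sum_subtractf sum_distrib_right[symmetric])
  have "x = 0" if "M *v x = 0" for x
  proof -
    have mean0: "(\<Sum>j\<in>UNIV. p j * x $ j) = 0" using p_Mv[of x] that by simp
    then have harmonic: "x $ s = (\<Sum>t\<in>UNIV. Q s t * x $ t)" for s using Mv[of x s] that by simp
    have const: "x $ s = x $ s'" for s s'
      by (rule harmonic_imp_constant[of "\<lambda>s. x $ s"]) (rule harmonic)
    fix s0 :: 's
    have "(\<Sum>j\<in>UNIV. p j * x $ j) = (\<Sum>j\<in>UNIV. p j) * x $ s0"
      unfolding sum_distrib_right by (intro sum.cong refl) (metis const)
    then have "x $ s0 = 0" using mean0 stationary_sum_eq_1[OF p] by simp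
    then show "x = 0" using const[of _ s0] by (simp add: vec_eq_iff)
  qed
  then obtain B where "B ** M = mat 1" using matrix_left_invertible_ker by blast
  then have "M ** B = mat 1" using matrix_left_right_inverse by blast
  define x where "x = B *v (\<chi> i. v i)"
  have Mx: "M *v x = (\<chi> i. v i)"
    unfolding x_def by (simp add: matrix_vector_mul_assoc \<open>M ** B = mat 1\<close>)
  then have "(\<Sum>j\<in>UNIV. p j * x $ j) = 0" using p_Mv[of x] v by simp
  then have "x $ s = v s + (\<Sum>t\<in>UNIV. Q s t * x $ t)" for s
    using Mv[of x s] Mx by simp
  then show ?thesis by blast
qed

end

section \<open>Policies\<close>

lemma finite_joint_actions: "valid_game A P \<Longrightarrow> finite (joint_actions A)"
  unfolding joint_actions_def valid_game_def by (intro finite_PiE) auto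

lemma joint_actionsD: "a \<in> joint_actions A \<Longrightarrow> a i \<in> A i"
  unfolding joint_actions_def by auto

lemma joint_actions_upd: "a \<in> joint_actions A \<Longrightarrow> b \<in> A k \<Longrightarrow> a(k := b) \<in> joint_actions A"
  unfolding joint_actions_def by (auto simp: PiE_iff)

lemma sum_joint_actions_prod:
  fixes f :: "'i::finite \<Rightarrow> 'a \<Rightarrow> real"
  assumes "valid_game A P"
  shows "(\<Sum>a\<in>joint_actions A. \<Prod>i\<in>UNIV. f i (a i)) = (\<Prod>i\<in>UNIV. \<Sum>b\<in>A i. f i b)"
  using prod_sum_PiE[of UNIV A f] assms unfolding joint_actions_def valid_game_def by simp

lemma policy_nonneg: "is_policy Ai m \<Longrightarrow> 0 \<le> m s b"
  unfolding is_policy_def by blast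

lemma policy_sum_eq_1: "is_policy Ai m \<Longrightarrow> (\<Sum>b\<in>Ai. m s b) = 1"
  unfolding is_policy_def by blast

lemma policy_outside: "is_policy Ai m \<Longrightarrow> b \<notin> Ai \<Longrightarrow> m s b = 0"
  unfolding is_policy_def by blast

lemma policy_le_1:
  assumes m: "is_policy Ai m" and "finite Ai"
  shows "m s b \<le> 1"
proof (cases "b \<in> Ai")
  case True
  then have "m s b \<le> (\<Sum>x\<in>Ai. m s x)"
    by (intro member_le_sum policy_nonneg[OF m] \<open>finite Ai\<close>)
  then show ?thesis using policy_sum_eq_1[OF m] by simp
qed (simp add: policy_outside[OF m])

lemma policy_eq_indicator:
  assumes m: "is_policy Ai m" and "finite Ai" and "b0 \<in> Ai" and "m s b0 = 1"
  shows "m s b = (if b = b0 then 1 else 0)"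
proof -
  have "(\<Sum>x\<in>Ai - {b0}. m s x) = 0"
    using sum.remove[OF \<open>finite Ai\<close> \<open>b0 \<in> Ai\<close>, of "m s"] policy_sum_eq_1[OF m] \<open>m s b0 = 1\<close> by simp
  then have "\<forall>x\<in>Ai - {b0}. m s x = 0"
    using sum_nonneg_eq_0_iff[of "Ai - {b0}" "m s"] \<open>finite Ai\<close> policy_nonneg[OF m] by simp
  then show ?thesis using \<open>m s b0 = 1\<close> policy_outside[OF m] by (cases "b \<in> Ai") auto
qed

lemma is_policy_mix:
  assumes m1: "is_policy Ai m1" and m2: "is_policy Ai m2" and "0 \<le> d" "d \<le> 1"
  shows "is_policy Ai (mix d m1 m2)"
  unfolding is_policy_def mix_def
proof (intro conjI allI impI)
  show "0 \<le> (1 - d) * m1 s a + d * m2 s a" for s a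
    using policy_nonneg[OF m1] policy_nonneg[OF m2] \<open>0 \<le> d\<close> \<open>d \<le> 1\<close> by simp
  show "(\<Sum>a\<in>Ai. (1 - d) * m1 s a + d * m2 s a) = 1" for s
    using policy_sum_eq_1[OF m1] policy_sum_eq_1[OF m2] by (simp add: sum.distrib sum_distrib_left[symmetric])
  show "(1 - d) * m1 s a + d * m2 s a = 0" if "a \<notin> Ai" for s a
    using policy_outside[OF m1 that] policy_outside[OF m2 that] by simp
qed

lemma is_joint_policy_mix:
  assumes "is_joint_policy A mustar" "is_joint_policy A mu" "0 \<le> d" "d \<le> 1"
  shows "is_joint_policy A (\<lambda>i. mix d (mustar i) (mu i))"
  using assms unfolding is_joint_policy_def by (simp add: is_policy_mix)

lemma mix_self: "mix d m m = m"
  unfolding mix_def by (simp add: algebra_simps)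

lemma joint_policyD: "is_joint_policy A mu \<Longrightarrow> is_policy (A i) (mu i)"
  unfolding is_joint_policy_def by blast

lemma joint_policy_upd:
  "is_joint_policy A mu \<Longrightarrow> is_policy (A i) m \<Longrightarrow> is_joint_policy A (mu(i := m))"
  unfolding is_joint_policy_def by auto

lemma joint_prob_nonneg: "is_joint_policy A mu \<Longrightarrow> 0 \<le> joint_prob mu s a"
  unfolding joint_prob_def by (intro prod_nonneg) (auto intro: policy_nonneg joint_policyD)

lemma joint_prob_sum_eq_1:
  assumes "valid_game A P" and "is_joint_policy A mu"
  shows "(\<Sum>a\<in>joint_actions A. joint_prob mu s a) = 1"
  unfolding joint_prob_def sum_joint_actions_prod[OF assms(1), of "\<lambda>i. mu i s"]
  by (simp add: policy_sum_eq_1 joint_policyD[OF assms(2)])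

lemma joint_prob_upd_diff:
  "joint_prob (mu(i := m)) s a - joint_prob mu s a
     = (m s (a i) - mu i s (a i)) * (\<Prod>j\<in>UNIV - {i}. mu j s (a j))"
proof -
  have split: "joint_prob nu s a = nu i s (a i) * (\<Prod>j\<in>UNIV - {i}. nu j s (a j))" for nu
    unfolding joint_prob_def by (rule prod.remove) auto
  have "(\<Prod>j\<in>UNIV - {i}. (mu(i := m)) j s (a j)) = (\<Prod>j\<in>UNIV - {i}. mu j s (a j))"
    by (rule prod.cong) auto
  then show ?thesis
    using split[of "mu(i := m)"] split[of mu] by (simp add: left_diff_distrib)
qed

locale ergodic_game =
  fixes A :: "'i::finite \<Rightarrow> 'a set" and P :: "'s::finite \<Rightarrow> ('i \<Rightarrow> 'a) \<Rightarrow> 's \<Rightarrow> real"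
  assumes valid: "valid_game A P"
    and ergodic: "is_joint_policy A mu \<Longrightarrow> ergodic_chain (chain A P mu)"
begin

lemma finite_actions: "finite (A i)"
  using valid unfolding valid_game_def by blast

lemma irreducible_markov_chain:
  assumes mu: "is_joint_policy A mu"
  shows "irreducible_markov_chain (chain A P mu)"
proof
  show "0 \<le> chain A P mu s s'" for s s'
    unfolding chain_def using valid joint_prob_nonneg[OF mu] unfolding valid_game_def
    by (intro sum_nonneg mult_nonneg_nonneg) auto
  have "(\<Sum>s'\<in>UNIV. chain A P mu s s')
      = (\<Sum>a\<in>joint_actions A. joint_prob mu s a * (\<Sum>s'\<in>UNIV. P s a s'))" for s
    unfolding chain_def by (simp add: sum_distrib_left) (rule sum.swap)
  then show "(\<Sum>s'\<in>UNIV. chain A P mu s s') = 1" for s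
    using valid joint_prob_sum_eq_1[OF valid mu] unfolding valid_game_def by simp
  show "irreducible_chain (chain A P mu)"
    using ergodic[OF mu] unfolding ergodic_chain_def by blast
qed

lemma stat_dist_stationary:
  assumes mu: "is_joint_policy A mu"
  shows "is_stationary (chain A P mu) (stat_dist A P mu)"
proof -
  interpret irreducible_markov_chain "chain A P mu" by (rule irreducible_markov_chain[OF mu])
  obtain p where "is_stationary (chain A P mu) p" using stationary_exists by blast
  then have "\<exists>!p. is_stationary (chain A P mu) p" using stationary_unique by blast
  then show ?thesis unfolding stat_dist_def by (rule theI')
qed

lemma stat_dist_pos: "is_joint_policy A mu \<Longrightarrow> stat_dist A P mu s > 0"
  using irreducible_markov_chain.stationary_pos[OF irreducible_markov_chain stat_dist_stationary] .

lemma stat_dist_sum_eq_1: "is_joint_policy A mu \<Longrightarrow> (\<Sum>s\<in>UNIV. stat_dist A P mu s) = 1"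
  using stationary_sum_eq_1[OF stat_dist_stationary] .

end

section \<open>Long-run averages and the performance difference lemma\<close>

definition long_run_average ::
  "('i::finite \<Rightarrow> 'a set) \<Rightarrow> ('s::finite \<Rightarrow> ('i \<Rightarrow> 'a) \<Rightarrow> 's \<Rightarrow> real) \<Rightarrow>
   ('s \<Rightarrow> ('i \<Rightarrow> 'a) \<Rightarrow> real) \<Rightarrow> ('i \<Rightarrow> 's \<Rightarrow> 'a \<Rightarrow> real) \<Rightarrow> real" where
  "long_run_average A P g mu =
     (\<Sum>s\<in>UNIV. stat_dist A P mu s * (\<Sum>a\<in>joint_actions A. joint_prob mu s a * g s a))"

lemma long_run_average_add_scaled:
  "long_run_average A P (\<lambda>s a. f s a + c * g s a) mu
     = long_run_average A P f mu + c * long_run_average A P g mu"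
  unfolding long_run_average_def by (simp add: algebra_simps sum.distrib sum_distrib_left)

definition advantage ::
  "('i::finite \<Rightarrow> 'a set) \<Rightarrow> ('s \<Rightarrow> ('i \<Rightarrow> 'a) \<Rightarrow> real) \<Rightarrow>
   ('i \<Rightarrow> 's \<Rightarrow> 'a \<Rightarrow> real) \<Rightarrow> ('i \<Rightarrow> 's \<Rightarrow> 'a \<Rightarrow> real) \<Rightarrow> 's \<Rightarrow> real" where
  "advantage A q mustar mu s =
     (\<Sum>a\<in>joint_actions A. (joint_prob mu s a - joint_prob mustar s a) * q s a)"

lemma advantage_eq_diff:
  "advantage A q mustar mu s
     = (\<Sum>a\<in>joint_actions A. joint_prob mu s a * q s a)
       - (\<Sum>a\<in>joint_actions A. joint_prob mustar s a * q s a)"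
  unfolding advantage_def by (simp add: left_diff_distrib sum_subtractf)

lemma expected_one_step:
  "(\<Sum>a\<in>joint_actions A. joint_prob mu s a * (f s a + (\<Sum>t\<in>UNIV. P s a t * h t)))
     = (\<Sum>a\<in>joint_actions A. joint_prob mu s a * f s a) + (\<Sum>t\<in>UNIV. chain A P mu s t * h t)"
proof -
  have "(\<Sum>a\<in>joint_actions A. \<Sum>t\<in>UNIV. joint_prob mu s a * P s a t * h t)
      = (\<Sum>t\<in>UNIV. chain A P mu s t * h t)"
    unfolding chain_def by (subst sum.swap) (simp add: sum_distrib_right)
  then show ?thesis
    by (simp add: distrib_left sum.distrib sum_distrib_left mult.assoc)
qed

text \<open>The mean-variance objective compares policies through \<open>J(\<mu>) - J(\<mu>\<^sup>*) = (g(\<mu>) - g(\<mu>\<^sup>*))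
  + \<beta> (\<eta>(\<mu>) - \<eta>(\<mu>\<^sup>*))\<^sup>2\<close>, where \<open>g\<close> is the long-run average of the reward
  \<open>r - \<beta> r\<^sup>2 + 2 \<beta> \<eta>(\<mu>\<^sup>*) r\<close>; both averages are then expressed through advantages.\<close>

definition Jmv_difference_form ::
  "('i::finite \<Rightarrow> 'a set) \<Rightarrow> ('s::finite \<Rightarrow> ('i \<Rightarrow> 'a) \<Rightarrow> 's \<Rightarrow> real) \<Rightarrow>
   ('s \<Rightarrow> ('i \<Rightarrow> 'a) \<Rightarrow> real) \<Rightarrow> real \<Rightarrow> ('i \<Rightarrow> 's \<Rightarrow> 'a \<Rightarrow> real) \<Rightarrow>
   ('s \<Rightarrow> ('i \<Rightarrow> 'a) \<Rightarrow> real) \<Rightarrow> ('s \<Rightarrow> ('i \<Rightarrow> 'a) \<Rightarrow> real) \<Rightarrow> bool" where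
  "Jmv_difference_form A P r beta mustar qg qr \<longleftrightarrow>
     (\<forall>mu. is_joint_policy A mu \<longrightarrow>
        Jmv A P r beta mu - Jmv A P r beta mustar
          = (\<Sum>s\<in>UNIV. stat_dist A P mu s * advantage A qg mustar mu s)
            + beta * (\<Sum>s\<in>UNIV. stat_dist A P mu s * advantage A qr mustar mu s)\<^sup>2)"

context ergodic_game
begin

lemma long_run_average_const:
  assumes "is_joint_policy A mu"
  shows "long_run_average A P (\<lambda>s a. c) mu = c"
  unfolding long_run_average_def
  by (simp add: sum_distrib_right[symmetric] joint_prob_sum_eq_1[OF valid assms] stat_dist_sum_eq_1[OF assms])

lemma Jmv_eq_moments:
  assumes mu: "is_joint_policy A mu"
  shows "Jmv A P r beta mu = long_run_average A P r mu
           - beta * long_run_average A P (\<lambda>s a. (r s a)\<^sup>2) mu + beta * (long_run_average A P r mu)\<^sup>2"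
proof -
  define E where "E = long_run_average A P r mu"
  have eta: "eta A P r mu = E" unfolding eta_def E_def long_run_average_def ..
  have "zeta A P r mu = long_run_average A P (\<lambda>s a. ((r s a)\<^sup>2 + (-2 * E) * r s a) + E\<^sup>2 * 1) mu"
    unfolding zeta_def long_run_average_def eta by (simp add: power2_eq_square algebra_simps)
  also have "\<dots> = long_run_average A P (\<lambda>s a. (r s a)\<^sup>2) mu - E\<^sup>2"
    unfolding long_run_average_add_scaled long_run_average_const[OF mu]
    by (simp add: E_def power2_eq_square)
  finally show ?thesis unfolding Jmv_def eta E_def by (simp add: right_diff_distrib)
qed

text \<open>The witness is the action-value function \<open>q = f + P h\<close> of \<open>\<mu>\<^sup>*\<close>, with \<open>h\<close> a solution of
  the Poisson equation of the chain under \<open>\<mu>\<^sup>*\<close>.\<close>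

lemma performance_difference:
  assumes mustar: "is_joint_policy A mustar"
  obtains q where "\<And>mu :: 'i \<Rightarrow> 's \<Rightarrow> 'a \<Rightarrow> real. is_joint_policy A mu \<Longrightarrow>
    long_run_average A P f mu - long_run_average A P f mustar
      = (\<Sum>s\<in>UNIV. stat_dist A P mu s * advantage A q mustar mu s)"
proof -
  interpret irreducible_markov_chain "chain A P mustar"
    by (rule irreducible_markov_chain[OF mustar])
  let ?p = "stat_dist A P mustar"
  define e where "e = long_run_average A P f mustar"
  define v where "v s = (\<Sum>a\<in>joint_actions A. joint_prob mustar s a * f s a) - e" for s
  have "(\<Sum>s\<in>UNIV. ?p s * v s) = e - (\<Sum>s\<in>UNIV. ?p s) * e"
    unfolding v_def e_def long_run_average_def
    by (simp add: right_diff_distrib sum_subtractf sum_distrib_right)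
  then have "(\<Sum>s\<in>UNIV. ?p s * v s) = 0" by (simp add: stat_dist_sum_eq_1[OF mustar])
  then obtain h where h: "\<And>s. h s = v s + (\<Sum>t\<in>UNIV. chain A P mustar s t * h t)"
    using poisson_equation_solvable[OF stat_dist_stationary[OF mustar]] by blast
  define q where "q s a = f s a + (\<Sum>t\<in>UNIV. P s a t * h t)" for s a
  have q_mean: "(\<Sum>a\<in>joint_actions A. joint_prob nu s a * q s a)
      = (\<Sum>a\<in>joint_actions A. joint_prob nu s a * f s a) + (\<Sum>t\<in>UNIV. chain A P nu s t * h t)"
    for nu s unfolding q_def by (rule expected_one_step)
  have q_mean_star: "(\<Sum>a\<in>joint_actions A. joint_prob mustar s a * q s a) = h s + e" for s
    using h[of s] unfolding q_mean v_def by simp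
  show ?thesis
  proof (rule that)
    fix mu :: "'i \<Rightarrow> 's \<Rightarrow> 'a \<Rightarrow> real"
    assume mu: "is_joint_policy A mu"
    let ?pm = "stat_dist A P mu"
    have "(\<Sum>s\<in>UNIV. ?pm s * advantage A q mustar mu s)
        = (\<Sum>s\<in>UNIV. ?pm s * ((\<Sum>a\<in>joint_actions A. joint_prob mu s a * f s a)
            + (\<Sum>t\<in>UNIV. chain A P mu s t * h t) - (h s + e)))"
      unfolding advantage_eq_diff q_mean_star q_mean ..
    also have "\<dots> = long_run_average A P f mu
        + (\<Sum>s\<in>UNIV. ?pm s * (\<Sum>t\<in>UNIV. chain A P mu s t * h t))
        - (\<Sum>s\<in>UNIV. ?pm s * h s) - (\<Sum>s\<in>UNIV. ?pm s) * e"
      unfolding long_run_average_def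
      by (simp add: algebra_simps sum.distrib sum_subtractf sum_distrib_right sum_distrib_left)
    also have "\<dots> = long_run_average A P f mu - e"
      by (simp add: stationary_expectation_step[OF stat_dist_stationary[OF mu]] stat_dist_sum_eq_1[OF mu])
    finally show "long_run_average A P f mu - long_run_average A P f mustar
        = (\<Sum>s\<in>UNIV. ?pm s * advantage A q mustar mu s)"
      unfolding e_def by simp
  qed
qed

lemma Jmv_difference_form_exists:
  assumes mustar: "is_joint_policy A mustar"
  obtains qg qr where "Jmv_difference_form A P r beta mustar qg qr"
proof -
  define E where "E = long_run_average A P r mustar"
  define g where "g s a = (r s a + (- beta) * (r s a)\<^sup>2) + (2 * beta * E) * r s a" for s a
  obtain qg where qg: "\<And>mu. is_joint_policy A mu \<Longrightarrow>
      long_run_average A P g mu - long_run_average A P g mustar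
        = (\<Sum>s\<in>UNIV. stat_dist A P mu s * advantage A qg mustar mu s)"
    using performance_difference[OF mustar] by blast
  obtain qr where qr: "\<And>mu. is_joint_policy A mu \<Longrightarrow>
      long_run_average A P r mu - long_run_average A P r mustar
        = (\<Sum>s\<in>UNIV. stat_dist A P mu s * advantage A qr mustar mu s)"
    using performance_difference[OF mustar] by blast
  have "Jmv A P r beta mu - Jmv A P r beta mustar
      = (long_run_average A P g mu - long_run_average A P g mustar)
        + beta * (long_run_average A P r mu - long_run_average A P r mustar)\<^sup>2"
    if "is_joint_policy A mu" for mu
    unfolding Jmv_eq_moments[OF that] Jmv_eq_moments[OF mustar] g_def long_run_average_add_scaled E_def
    by (simp add: power2_eq_square algebra_simps)
  then have "Jmv_difference_form A P r beta mustar qg qr"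
    unfolding Jmv_difference_form_def using qg qr by simp
  then show ?thesis by (rule that)
qed

end

section \<open>Strict local Nash equilibria are deterministic\<close>

lemma advantage_upd_mix:
  "advantage A q mustar (mustar(i := mix d (mustar i) m)) s
     = d * advantage A q mustar (mustar(i := m)) s"
  unfolding advantage_def joint_prob_upd_diff sum_distrib_left mix_def
  by (intro sum.cong refl) (simp add: algebra_simps)

lemma advantage_upd_eq_0: "m s = mustar i s \<Longrightarrow> advantage A q mustar (mustar(i := m)) s = 0"
  unfolding advantage_def joint_prob_upd_diff by simp

definition deterministic_at :: "('i \<Rightarrow> 's \<Rightarrow> 'a \<Rightarrow> real) \<Rightarrow> 's \<Rightarrow> ('i \<Rightarrow> 'a) \<Rightarrow> bool" where
  "deterministic_at mu s al \<longleftrightarrow> (\<forall>j b. mu j s b = (if b = al j then 1 else 0))"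

lemma joint_prob_deterministic:
  assumes "deterministic_at mu s al"
  shows "joint_prob mu s a = (if a = al then 1 else 0)"
proof (cases "a = al")
  case False
  then obtain j where "a j \<noteq> al j" by auto
  then have "mu j s (a j) = 0" using assms unfolding deterministic_at_def by simp
  then show ?thesis unfolding joint_prob_def using False by (simp add: prod_zero_iff) blast
qed (use assms in \<open>simp add: joint_prob_def deterministic_at_def\<close>)

lemma expectation_deterministic:
  assumes "deterministic_at mu s al" and "al \<in> joint_actions A" and "finite (joint_actions A)"
  shows "(\<Sum>a\<in>joint_actions A. joint_prob mu s a * f a) = f al"
proof -
  have "(\<Sum>a\<in>joint_actions A. joint_prob mu s a * f a) = (\<Sum>a\<in>joint_actions A. if a = al then f a else 0)"
    by (intro sum.cong refl) (simp add: joint_prob_deterministic[OF assms(1)])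
  then show ?thesis using assms(2,3) by simp
qed

lemma advantage_deterministic:
  assumes "deterministic_at mustar s al" "al \<in> joint_actions A"
    and "deterministic_at mu s be" "be \<in> joint_actions A"
    and "finite (joint_actions A)"
  shows "advantage A q mustar mu s = q s be - q s al"
  unfolding advantage_eq_diff using assms by (simp add: expectation_deterministic)

text \<open>The perturbation shifts mass between two actions that both carry positive probability.\<close>

lemma non_deterministic_policy_perturbation:
  assumes m: "is_policy Ai m" and fin: "finite Ai" and no_pure: "\<not> (\<exists>b\<in>Ai. m s b = 1)"
  obtains w where "w \<noteq> (\<lambda>_. 0)"
    and "\<And>c. \<bar>c\<bar> \<le> 1 \<Longrightarrow> is_policy Ai (m(s := \<lambda>b. m s b + c * w b))"
proof -
  let ?u = "m s"
  obtain b1 where b1: "b1 \<in> Ai" "?u b1 > 0"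
    using sum_pos_imp_ex[of ?u Ai] policy_sum_eq_1[OF m] by auto
  have "?u b1 < 1" using policy_le_1[OF m fin] no_pure b1(1) by (meson le_less)
  then have "0 < (\<Sum>b\<in>Ai - {b1}. ?u b)"
    using sum.remove[OF fin b1(1), of ?u] policy_sum_eq_1[OF m] by simp
  then obtain b2 where b2: "b2 \<in> Ai" "b2 \<noteq> b1" "?u b2 > 0"
    using sum_pos_imp_ex[of ?u "Ai - {b1}"] by auto
  define e where "e = min (?u b1) (?u b2)"
  have e: "e > 0" "e \<le> ?u b1" "e \<le> ?u b2" unfolding e_def using b1 b2 by auto
  define w where "w b = (if b = b1 then e else 0) - (if b = b2 then e else 0)" for b
  show ?thesis
  proof (rule that)
    show "w \<noteq> (\<lambda>_. 0)" using e b2(2) by (auto simp: w_def fun_eq_iff)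
    have w_sum: "(\<Sum>b\<in>Ai. w b) = 0" unfolding w_def using b1 b2 fin by (simp add: sum_subtractf)
    fix c :: real assume "\<bar>c\<bar> \<le> 1"
    then have "- e \<le> c * e" "c * e \<le> e"
      using mult_right_mono[of "-1" c e] mult_right_mono[of c 1 e] e(1) by (auto simp: abs_le_iff)
    then have "0 \<le> ?u b1 + c * e" "0 \<le> ?u b2 - c * e" using e by linarith+
    show "is_policy Ai (m(s := \<lambda>b. m s b + c * w b))"
      unfolding is_policy_def
    proof (intro conjI allI impI)
      show "0 \<le> (m(s := \<lambda>b. m s b + c * w b)) t b" for t b
        using policy_nonneg[OF m, of t b] policy_nonneg[OF m, of s b] \<open>0 \<le> ?u b1 + c * e\<close>
          \<open>0 \<le> ?u b2 - c * e\<close> b2(2)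
        by (auto simp: w_def)
      show "(\<Sum>b\<in>Ai. (m(s := \<lambda>b. m s b + c * w b)) t b) = 1" for t
        using policy_sum_eq_1[OF m] w_sum by (simp add: sum.distrib sum_distrib_left[symmetric])
      show "(m(s := \<lambda>b. m s b + c * w b)) t b = 0" if "b \<notin> Ai" for t b
        using policy_outside[OF m that] that b1(1) b2(1) by (auto simp: w_def)
    qed
  qed
qed

context ergodic_game
begin

text \<open>Mixing \<open>m\<close> into \<open>\<mu>\<^sub>i\<^sup>*\<close> changes the joint policy only at \<open>s\<close>, so the
  difference form collapses to \<open>\<pi>(s) \<delta> A\<^sub>g + \<beta> (\<pi>(s) \<delta> A\<^sub>r)\<^sup>2\<close>, which the strict Nash
  inequality forces to be negative.\<close>

lemma strict_local_NE_single_state_advantage_neg: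
  assumes mustar: "is_joint_policy A mustar" and beta: "0 \<le> beta"
    and form: "Jmv_difference_form A P r beta mustar qg qr"
    and NE: "strict_local_NE A P r beta mustar"
    and m: "is_policy (A i) m" and same: "\<And>t. t \<noteq> s \<Longrightarrow> m t = mustar i t" and "m \<noteq> mustar i"
  shows "advantage A qg mustar (mustar(i := m)) s < 0"
proof -
  obtain d where d: "0 < d" "d \<le> 1" and NE_d: "\<And>i m. is_policy (A i) m \<Longrightarrow> m \<noteq> mustar i \<Longrightarrow>
      Jmv A P r beta (mustar(i := mix d (mustar i) m)) < Jmv A P r beta mustar"
    using NE unfolding strict_local_NE_def by (meson order_refl)
  define mu where "mu = mustar(i := mix d (mustar i) m)"
  have mu: "is_joint_policy A mu"
    unfolding mu_def using d by (intro joint_policy_upd mustar is_policy_mix joint_policyD m) auto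
  let ?p = "stat_dist A P mu s"
  have adv_mu: "advantage A q mustar mu t
      = (if t = s then d * advantage A q mustar (mustar(i := m)) s else 0)" for q t
    unfolding mu_def advantage_upd_mix using advantage_upd_eq_0[of m t mustar i] same[of t] by auto
  have collapse: "(\<Sum>t\<in>UNIV. stat_dist A P mu t * advantage A q mustar mu t)
      = ?p * (d * advantage A q mustar (mustar(i := m)) s)" for q
  proof -
    have "(\<Sum>t\<in>UNIV. stat_dist A P mu t * advantage A q mustar mu t)
        = (\<Sum>t\<in>UNIV. if t = s then ?p * (d * advantage A q mustar (mustar(i := m)) s) else 0)"
      by (intro sum.cong refl) (simp add: adv_mu)
    then show ?thesis by simp
  qed
  have "Jmv A P r beta mu - Jmv A P r beta mustar
      = ?p * (d * advantage A qg mustar (mustar(i := m)) s)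
        + beta * (?p * (d * advantage A qr mustar (mustar(i := m)) s))\<^sup>2"
    using form mu unfolding Jmv_difference_form_def by (simp add: collapse)
  moreover have "Jmv A P r beta mu < Jmv A P r beta mustar"
    unfolding mu_def using NE_d[OF m \<open>m \<noteq> mustar i\<close>] .
  moreover have "0 < ?p" by (rule stat_dist_pos[OF mu])
  ultimately show ?thesis
    using d beta by (smt (verit) mult_pos_pos zero_le_power2 mult_nonneg_nonneg)
qed

lemma strict_local_NE_deterministic:
  assumes mustar: "is_joint_policy A mustar" and beta: "0 \<le> beta"
    and form: "Jmv_difference_form A P r beta mustar qg qr"
    and NE: "strict_local_NE A P r beta mustar"
  shows "\<exists>b\<in>A i. mustar i s b = 1"
proof (rule ccontr)
  assume "\<not> ?thesis"
  then obtain w where "w \<noteq> (\<lambda>_. 0)"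
    and pol: "\<And>c. \<bar>c\<bar> \<le> 1 \<Longrightarrow> is_policy (A i) ((mustar i)(s := \<lambda>b. mustar i s b + c * w b))"
    using non_deterministic_policy_perturbation[OF joint_policyD[OF mustar] finite_actions] by blast
  define L where "L = (\<Sum>a\<in>joint_actions A. w (a i) * (\<Prod>j\<in>UNIV - {i}. mustar j s (a j)) * qg s a)"
  have linear: "advantage A qg mustar (mustar(i := (mustar i)(s := \<lambda>b. mustar i s b + c * w b))) s = c * L"
    for c
    unfolding advantage_def joint_prob_upd_diff L_def sum_distrib_left
    by (intro sum.cong refl) (simp add: algebra_simps)
  have "c * L < 0" if "c \<noteq> 0" "\<bar>c\<bar> \<le> 1" for c
    unfolding linear[symmetric]
  proof (rule strict_local_NE_single_state_advantage_neg[OF mustar beta form NE pol[OF that(2)]])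
    show "(mustar i)(s := \<lambda>b. mustar i s b + c * w b) \<noteq> mustar i"
      using \<open>w \<noteq> (\<lambda>_. 0)\<close> \<open>c \<noteq> 0\<close> by (auto simp: fun_eq_iff dest!: fun_cong[of _ _ s])
  qed simp
  from this[of 1] this[of "-1"] show False by simp
qed

lemma strict_local_NE_unilateral_loss:
  assumes mustar: "is_joint_policy A mustar" and beta: "0 \<le> beta"
    and form: "Jmv_difference_form A P r beta mustar qg qr"
    and NE: "strict_local_NE A P r beta mustar"
    and det: "deterministic_at mustar s al" and al: "al \<in> joint_actions A"
    and b: "b \<in> A k" "b \<noteq> al k"
  shows "qg s (al(k := b)) - qg s al < 0"
proof -
  define m where "m = (mustar k)(s := (\<lambda>x. if x = b then 1 else 0))"
  have m: "is_policy (A k) m"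
    unfolding is_policy_def m_def
    using joint_policyD[OF mustar, of k] b(1) finite_actions
    by (auto simp: policy_nonneg policy_sum_eq_1 policy_outside)
  have "m \<noteq> mustar k"
    using det b(2) unfolding m_def deterministic_at_def by (auto simp: fun_eq_iff dest!: fun_cong[of _ _ s])
  then have "advantage A qg mustar (mustar(k := m)) s < 0"
    by (rule strict_local_NE_single_state_advantage_neg[OF mustar beta form NE m, rotated]) (simp add: m_def)
  moreover have "deterministic_at (mustar(k := m)) s (al(k := b))"
    using det unfolding m_def deterministic_at_def by auto
  then have "advantage A qg mustar (mustar(k := m)) s = qg s (al(k := b)) - qg s al"
    using advantage_deterministic[OF det al _ joint_actions_upd[OF al b(1)] finite_joint_actions[OF valid]]
    by blast
  ultimately show ?thesis by simp
qed

end

section \<open>Simultaneous deviations under product policies\<close>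

definition mismatch :: "('i \<Rightarrow> 'a) \<Rightarrow> ('i \<Rightarrow> 'a) \<Rightarrow> 'i \<Rightarrow> real" where
  "mismatch al a k = (if a k \<noteq> al k then 1 else 0)"

definition num_mismatch :: "('i::finite \<Rightarrow> 'a) \<Rightarrow> ('i \<Rightarrow> 'a) \<Rightarrow> real" where
  "num_mismatch al a = (\<Sum>k\<in>UNIV. mismatch al a k)"

definition deviation_mass :: "('i::finite \<Rightarrow> 's \<Rightarrow> 'a \<Rightarrow> real) \<Rightarrow> 's \<Rightarrow> ('i \<Rightarrow> 'a) \<Rightarrow> real" where
  "deviation_mass x s al = (\<Sum>k\<in>UNIV. 1 - x k s (al k))"

lemma mismatch_mult_self: "mismatch al a k * mismatch al a k = mismatch al a k"
  unfolding mismatch_def by simp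

lemma num_mismatch_eq_card: "num_mismatch al a = real (card {k. a k \<noteq> al k})"
  unfolding num_mismatch_def mismatch_def by (simp add: sum.If_cases)

lemma num_mismatch_le_card: "num_mismatch (al :: 'i::finite \<Rightarrow> 'a) a \<le> real CARD('i)"
  unfolding num_mismatch_eq_card by (simp add: card_mono)

lemma num_mismatch_eq_0_iff: "num_mismatch al a = 0 \<longleftrightarrow> a = al"
  unfolding num_mismatch_eq_card by (auto simp: fun_eq_iff)

text \<open>Under a product policy the mismatch indicators of different agents are independent.\<close>

lemma expected_prod_mismatch:
  fixes A :: "'i::finite \<Rightarrow> 'a set"
  assumes valid: "valid_game A P" and x: "is_joint_policy A x" and al: "al \<in> joint_actions A"
  shows "(\<Sum>a\<in>joint_actions A. joint_prob x s a * (\<Prod>k\<in>K. mismatch al a k))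
           = (\<Prod>k\<in>K. 1 - x k s (al k))"
proof -
  define f where "f i b = x i s b * (if i \<in> K then (if b \<noteq> al i then 1 else 0) else 1)" for i b
  have "joint_prob x s a * (\<Prod>k\<in>K. mismatch al a k) = (\<Prod>i\<in>UNIV. f i (a i))" for a
    unfolding f_def joint_prob_def mismatch_def prod.distrib
    by (simp add: prod.If_cases Int_absorb1)
  then have "(\<Sum>a\<in>joint_actions A. joint_prob x s a * (\<Prod>k\<in>K. mismatch al a k))
      = (\<Prod>i\<in>UNIV. \<Sum>b\<in>A i. f i b)"
    by (simp add: sum_joint_actions_prod[OF valid])
  also have "\<dots> = (\<Prod>i\<in>UNIV. if i \<in> K then 1 - x i s (al i) else 1)"
  proof (intro prod.cong refl)
    fix i
    have xi: "is_policy (A i) (x i)" by (rule joint_policyD[OF x])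
    have "(\<Sum>b\<in>A i. x i s b * (if b \<noteq> al i then 1 else 0))
        = (\<Sum>b\<in>A i. x i s b - (if b = al i then x i s b else 0))"
      by (intro sum.cong refl) simp
    also have "\<dots> = (\<Sum>b\<in>A i. x i s b) - x i s (al i)"
      using joint_actionsD[OF al] valid unfolding valid_game_def by (simp add: sum_subtractf)
    finally have "(\<Sum>b\<in>A i. x i s b * (if b \<noteq> al i then 1 else 0)) = (\<Sum>b\<in>A i. x i s b) - x i s (al i)" .
    then show "(\<Sum>b\<in>A i. f i b) = (if i \<in> K then 1 - x i s (al i) else 1)"
      unfolding f_def using policy_sum_eq_1[OF xi] by simp
  qed
  also have "\<dots> = (\<Prod>k\<in>K. 1 - x k s (al k))"
    by (simp add: prod.If_cases)
  finally show ?thesis .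
qed

lemma expected_mismatch:
  fixes A :: "'i::finite \<Rightarrow> 'a set"
  assumes "valid_game A P" "is_joint_policy A x" "al \<in> joint_actions A"
  shows "(\<Sum>a\<in>joint_actions A. joint_prob x s a * mismatch al a k) = 1 - x k s (al k)"
  using expected_prod_mismatch[OF assms, of s "{k}"] by simp

lemma expected_num_mismatch:
  fixes A :: "'i::finite \<Rightarrow> 'a set"
  assumes "valid_game A P" "is_joint_policy A x" "al \<in> joint_actions A"
  shows "(\<Sum>a\<in>joint_actions A. joint_prob x s a * num_mismatch al a) = deviation_mass x s al"
  unfolding num_mismatch_def deviation_mass_def sum_distrib_left
  by (subst sum.swap) (simp add: expected_mismatch[OF assms])

text \<open>\<open>W\<^sup>2 - W\<close> for the mismatch count \<open>W\<close> only involves products of two distinct independent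
  indicators, so its expectation is \<open>\<Sum>\<^sub>k\<^sub>\<noteq>\<^sub>l p\<^sub>k p\<^sub>l \<le> (\<Sum>\<^sub>k p\<^sub>k)\<^sup>2\<close>.\<close>

lemma expected_num_mismatch_excess:
  fixes A :: "'i::finite \<Rightarrow> 'a set"
  assumes valid: "valid_game A P" and x: "is_joint_policy A x" and al: "al \<in> joint_actions A"
  shows "(\<Sum>a\<in>joint_actions A. joint_prob x s a * ((num_mismatch al a)\<^sup>2 - num_mismatch al a))
           \<le> (deviation_mass x s al)\<^sup>2"
proof -
  let ?p = "\<lambda>k. 1 - x k s (al k)"
  have p_nonneg: "0 \<le> ?p k" for k
    using policy_le_1[OF joint_policyD[OF x]] valid unfolding valid_game_def by simp
  have pair: "(\<Sum>a\<in>joint_actions A. joint_prob x s a * (mismatch al a k * mismatch al a l))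
      = (if k = l then ?p k else ?p k * ?p l)" for k l
  proof (cases "k = l")
    case True
    then show ?thesis
      using expected_mismatch[OF valid x al, of s k] by (simp add: mismatch_mult_self)
  next
    case False
    then show ?thesis using expected_prod_mismatch[OF valid x al, of s "{k, l}"] by simp
  qed
  have "(\<Sum>a\<in>joint_actions A. joint_prob x s a * (num_mismatch al a)\<^sup>2)
      = (\<Sum>a\<in>joint_actions A. \<Sum>k\<in>UNIV. \<Sum>l\<in>UNIV. joint_prob x s a * (mismatch al a k * mismatch al a l))"
  proof (intro sum.cong refl)
    fix a
    have "(num_mismatch al a)\<^sup>2 = (\<Sum>k\<in>UNIV. \<Sum>l\<in>UNIV. mismatch al a k * mismatch al a l)"
      unfolding num_mismatch_def power2_eq_square by (rule sum_product)
    then show "joint_prob x s a * (num_mismatch al a)\<^sup>2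
        = (\<Sum>k\<in>UNIV. \<Sum>l\<in>UNIV. joint_prob x s a * (mismatch al a k * mismatch al a l))"
      by (simp add: sum_distrib_left)
  qed
  also have "\<dots> = (\<Sum>k\<in>UNIV. \<Sum>a\<in>joint_actions A. \<Sum>l\<in>UNIV. joint_prob x s a * (mismatch al a k * mismatch al a l))"
    by (rule sum.swap)
  also have "\<dots> = (\<Sum>k\<in>UNIV. \<Sum>l\<in>UNIV. \<Sum>a\<in>joint_actions A. joint_prob x s a * (mismatch al a k * mismatch al a l))"
    by (intro sum.cong refl) (rule sum.swap)
  also have "\<dots> \<le> (\<Sum>k\<in>UNIV. \<Sum>l\<in>UNIV. (if k = l then ?p k else 0) + ?p k * ?p l)"
    unfolding pair by (intro sum_mono) (simp add: p_nonneg)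
  also have "\<dots> = deviation_mass x s al + (deviation_mass x s al)\<^sup>2"
    unfolding deviation_mass_def power2_eq_square sum.distrib sum_product by (simp add: sum.delta)
  finally show ?thesis
    using expected_num_mismatch[OF valid x al, of s] by (simp add: right_diff_distrib sum_subtractf)
qed

text \<open>For a single mismatch this is the unilateral bound \<open>c\<close>; for two or more mismatches the
  quadratic term alone dominates the crude bound \<open>2 Q\<close>.\<close>

lemma gain_le_mismatch_bound:
  fixes A :: "'i::finite \<Rightarrow> 'a set" and q :: "('i \<Rightarrow> 'a) \<Rightarrow> real"
  assumes a: "a \<in> joint_actions A" and al: "al \<in> joint_actions A"
    and unilateral: "\<And>k b. b \<in> A k \<Longrightarrow> b \<noteq> al k \<Longrightarrow> q (al(k := b)) - q al \<le> c"
    and bounded: "\<And>a'. a' \<in> joint_actions A \<Longrightarrow> \<bar>q a'\<bar> \<le> Q"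
    and "c < 0"
  shows "q a - q al \<le> c * num_mismatch al a
           + (2 * Q - c * real CARD('i)) * ((num_mismatch al a)\<^sup>2 - num_mismatch al a)"
proof -
  define n where "n = card {k. a k \<noteq> al k}"
  have W: "num_mismatch al a = real n" unfolding n_def num_mismatch_eq_card ..
  have crude: "q a - q al \<le> 2 * Q" using bounded[OF a] bounded[OF al] by linarith
  consider "n = 0" | "n = 1" | "n \<ge> 2" by linarith
  then show ?thesis
  proof cases
    case 1
    then have "a = al" using W num_mismatch_eq_0_iff[of al a] by simp
    then show ?thesis unfolding W using 1 by simp
  next
    case 2
    then obtain k where k: "{k. a k \<noteq> al k} = {k}" unfolding n_def by (meson card_1_singletonE)
    then have "a = al(k := a k)" by (auto simp: fun_eq_iff)
    moreover have "a k \<noteq> al k" using k by auto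
    ultimately have "q a - q al \<le> c" using unilateral[OF joint_actionsD[OF a]] by metis
    then show ?thesis using W 2 by simp
  next
    case 3
    have "c * real CARD('i) \<le> c * real n"
      using W num_mismatch_le_card[of al a] \<open>c < 0\<close> by (simp add: mult_left_mono_neg)
    moreover have "1 \<le> (real n)\<^sup>2 - real n"
      using 3 mult_mono[of 1 "real n" 1 "real n - 1"] by (simp add: power2_eq_square algebra_simps)
    moreover have "0 \<le> 2 * Q - c * real CARD('i)"
      using bounded[OF al] \<open>c < 0\<close> by (smt (verit) mult_nonpos_nonneg of_nat_0_le_iff)
    ultimately show ?thesis
      using crude W mult_left_mono[of 1 "(real n)\<^sup>2 - real n" "2 * Q - c * real CARD('i)"] \<open>c < 0\<close>
      by (smt (verit) mult_nonneg_nonneg of_nat_0_le_iff)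
  qed
qed

lemma diff_abs_le_mismatch_bound:
  fixes A :: "'i::finite \<Rightarrow> 'a set" and q :: "('i \<Rightarrow> 'a) \<Rightarrow> real"
  assumes a: "a \<in> joint_actions A" and al: "al \<in> joint_actions A"
    and bounded: "\<And>a'. a' \<in> joint_actions A \<Longrightarrow> \<bar>q a'\<bar> \<le> Q"
  shows "\<bar>q a - q al\<bar> \<le> 2 * Q * num_mismatch al a"
proof (cases "a = al")
  case False
  then have "1 \<le> num_mismatch al a"
    unfolding num_mismatch_eq_card by (simp add: Suc_le_eq card_gt_0_iff fun_eq_iff)
  moreover have "\<bar>q a - q al\<bar> \<le> 2 * Q" "0 \<le> Q" using bounded[OF a] bounded[OF al] by linarith+
  ultimately show ?thesis using mult_left_mono[of 1 "num_mismatch al a" "2 * Q"] by linarith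
qed (use num_mismatch_eq_0_iff[of al al] in simp)

lemma advantage_deterministic_expand:
  assumes valid: "valid_game A P" and x: "is_joint_policy A x" and al: "al \<in> joint_actions A"
    and det: "deterministic_at mustar s al"
  shows "advantage A q mustar x s = (\<Sum>a\<in>joint_actions A. joint_prob x s a * (q s a - q s al))"
proof -
  have "(\<Sum>a\<in>joint_actions A. joint_prob mustar s a * q s a) = q s al"
    by (rule expectation_deterministic[OF det al finite_joint_actions[OF valid]])
  also have "\<dots> = (\<Sum>a\<in>joint_actions A. joint_prob x s a * q s al)"
    using joint_prob_sum_eq_1[OF valid x] by (simp add: sum_distrib_right[symmetric])
  finally show ?thesis unfolding advantage_eq_diff by (simp add: right_diff_distrib sum_subtractf)
qed

lemma advantage_le_deviation_mass:
  fixes A :: "'i::finite \<Rightarrow> 'a set"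
  assumes valid: "valid_game A P" and x: "is_joint_policy A x" and al: "al \<in> joint_actions A"
    and det: "deterministic_at mustar s al"
    and unilateral: "\<And>k b. b \<in> A k \<Longrightarrow> b \<noteq> al k \<Longrightarrow> q s (al(k := b)) - q s al \<le> c"
    and bounded: "\<And>a'. a' \<in> joint_actions A \<Longrightarrow> \<bar>q s a'\<bar> \<le> Q"
    and "c < 0"
  shows "advantage A q mustar x s \<le> c * deviation_mass x s al
           + (2 * Q - c * real CARD('i)) * (deviation_mass x s al)\<^sup>2"
proof -
  let ?C = "2 * Q - c * real CARD('i)" and ?W = "num_mismatch al"
  have "0 \<le> ?C"
    using bounded[OF al] \<open>c < 0\<close> by (smt (verit) mult_nonpos_nonneg of_nat_0_le_iff)
  have "advantage A q mustar x s = (\<Sum>a\<in>joint_actions A. joint_prob x s a * (q s a - q s al))"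
    by (rule advantage_deterministic_expand[OF valid x al det])
  also have "\<dots> \<le> (\<Sum>a\<in>joint_actions A. joint_prob x s a * (c * ?W a + ?C * ((?W a)\<^sup>2 - ?W a)))"
    by (intro sum_mono mult_left_mono joint_prob_nonneg[OF x]
        gain_le_mismatch_bound[OF _ al, of _ "q s"] unilateral bounded \<open>c < 0\<close>)
  also have "\<dots> = c * (\<Sum>a\<in>joint_actions A. joint_prob x s a * ?W a)
      + ?C * (\<Sum>a\<in>joint_actions A. joint_prob x s a * ((?W a)\<^sup>2 - ?W a))"
    unfolding sum_distrib_left sum.distrib[symmetric]
    by (intro sum.cong refl) (simp only: ring_distribs mult.left_commute)
  also have "\<dots> \<le> c * deviation_mass x s al + ?C * (deviation_mass x s al)\<^sup>2"
    using expected_num_mismatch[OF valid x al] expected_num_mismatch_excess[OF valid x al] \<open>0 \<le> ?C\<close>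
    by (simp add: mult_left_mono)
  finally show ?thesis .
qed

lemma advantage_abs_le_deviation_mass:
  assumes valid: "valid_game A P" and x: "is_joint_policy A x" and al: "al \<in> joint_actions A"
    and det: "deterministic_at mustar s al"
    and bounded: "\<And>a'. a' \<in> joint_actions A \<Longrightarrow> \<bar>q s a'\<bar> \<le> Q"
  shows "\<bar>advantage A q mustar x s\<bar> \<le> 2 * Q * deviation_mass x s al"
proof -
  have "\<bar>advantage A q mustar x s\<bar> \<le> (\<Sum>a\<in>joint_actions A. \<bar>joint_prob x s a * (q s a - q s al)\<bar>)"
    unfolding advantage_deterministic_expand[OF valid x al det] by (rule sum_abs)
  also have "\<dots> \<le> (\<Sum>a\<in>joint_actions A. joint_prob x s a * (2 * Q * num_mismatch al a))"
    unfolding abs_mult abs_of_nonneg[OF joint_prob_nonneg[OF x]]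
    by (intro sum_mono mult_left_mono joint_prob_nonneg[OF x]
        diff_abs_le_mismatch_bound[OF _ al, of _ "q s"] bounded)
  also have "\<dots> = 2 * Q * (\<Sum>a\<in>joint_actions A. joint_prob x s a * num_mismatch al a)"
    by (simp add: sum_distrib_left mult.left_commute)
  also have "\<dots> = 2 * Q * deviation_mass x s al"
    by (simp add: expected_num_mismatch[OF valid x al])
  finally show ?thesis .
qed

section \<open>Strict local maximality\<close>

lemma finite_uniformly_negative:
  fixes f :: "'b \<Rightarrow> real"
  assumes "finite S" and "\<And>x. x \<in> S \<Longrightarrow> f x < 0"
  obtains c where "c < 0" and "\<And>x. x \<in> S \<Longrightarrow> f x \<le> c"
proof
  let ?M = "insert (-1) (f ` S)"
  have "finite ?M" using \<open>finite S\<close> by simp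
  then show "Max ?M < 0" using assms(2) by (auto simp: Max_less_iff)
  show "f x \<le> Max ?M" if "x \<in> S" for x using \<open>finite ?M\<close> that by (simp add: Max_ge)
qed

lemma bounded_on_joint_actions:
  fixes q :: "'s::finite \<Rightarrow> ('i \<Rightarrow> 'a) \<Rightarrow> real"
  assumes fin: "finite (joint_actions A)"
  obtains Q where "\<And>s a. a \<in> joint_actions A \<Longrightarrow> \<bar>q s a\<bar> \<le> Q"
proof
  fix s a assume a: "a \<in> joint_actions A"
  have "\<bar>q s a\<bar> \<le> (\<Sum>a\<in>joint_actions A. \<bar>q s a\<bar>)" by (rule member_le_sum[OF a _ fin]) simp
  also have "\<dots> \<le> (\<Sum>s\<in>UNIV. \<Sum>a\<in>joint_actions A. \<bar>q s a\<bar>)"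
    by (rule member_le_sum[of s UNIV "\<lambda>s. \<Sum>a\<in>joint_actions A. \<bar>q s a\<bar>"]) (simp_all add: sum_nonneg)
  finally show "\<bar>q s a\<bar> \<le> (\<Sum>s\<in>UNIV. \<Sum>a\<in>joint_actions A. \<bar>q s a\<bar>)" .
qed

lemma weighted_mean_variance_bound:
  fixes p E g h :: "'s::finite \<Rightarrow> real"
  assumes p_nonneg: "\<And>s. 0 \<le> p s" and p_sum: "(\<Sum>s\<in>UNIV. p s) = 1"
    and E_nonneg: "\<And>s. 0 \<le> E s" and E_le: "\<And>s. E s \<le> N"
    and g: "\<And>s. g s \<le> c * (d * E s) + C * (d * E s)\<^sup>2"
    and h: "\<And>s. \<bar>h s\<bar> \<le> R * (d * E s)"
    and "0 \<le> C" "0 \<le> beta" "0 \<le> d"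
  shows "(\<Sum>s\<in>UNIV. p s * g s) + beta * (\<Sum>s\<in>UNIV. p s * h s)\<^sup>2
           \<le> d * (\<Sum>s\<in>UNIV. p s * E s) * (c + d * (N * (C + beta * R\<^sup>2)))"
proof -
  define T where "T = (\<Sum>s\<in>UNIV. p s * E s)"
  have "0 \<le> T" unfolding T_def by (simp add: sum_nonneg p_nonneg E_nonneg)
  have "T \<le> (\<Sum>s\<in>UNIV. p s * N)"
    unfolding T_def by (intro sum_mono mult_left_mono E_le p_nonneg)
  then have "T \<le> N" by (simp add: sum_distrib_right[symmetric] p_sum)
  have "(\<Sum>s\<in>UNIV. p s * g s) \<le> (\<Sum>s\<in>UNIV. p s * ((c * d + C * d\<^sup>2 * N) * E s))"
  proof (intro sum_mono mult_left_mono p_nonneg)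
    fix s
    have "C * (d * E s)\<^sup>2 = (C * d\<^sup>2 * E s) * E s" by (simp add: power2_eq_square)
    also have "\<dots> \<le> (C * d\<^sup>2 * E s) * N"
      by (rule mult_left_mono[OF E_le]) (simp add: \<open>0 \<le> C\<close> E_nonneg)
    finally have "C * (d * E s)\<^sup>2 \<le> C * d\<^sup>2 * N * E s" by (simp add: algebra_simps)
    then show "g s \<le> (c * d + C * d\<^sup>2 * N) * E s" using g[of s] by (simp add: algebra_simps)
  qed
  also have "\<dots> = (c * d + C * d\<^sup>2 * N) * T"
    unfolding T_def sum_distrib_left by (intro sum.cong refl) (simp add: algebra_simps)
  finally have mean: "(\<Sum>s\<in>UNIV. p s * g s) \<le> (c * d + C * d\<^sup>2 * N) * T" .
  have "\<bar>\<Sum>s\<in>UNIV. p s * h s\<bar> \<le> (\<Sum>s\<in>UNIV. p s * (R * (d * E s)))"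
    using sum_abs[of "\<lambda>s. p s * h s" UNIV] sum_mono[of UNIV "\<lambda>s. \<bar>p s * h s\<bar>"]
      mult_left_mono[OF h p_nonneg] by (simp add: abs_mult abs_of_nonneg[OF p_nonneg]) (meson order_trans)
  also have "\<dots> = R * d * T"
    unfolding T_def sum_distrib_left by (intro sum.cong refl) (simp add: algebra_simps)
  finally have "(\<Sum>s\<in>UNIV. p s * h s)\<^sup>2 \<le> (R * d * T)\<^sup>2"
    by (metis abs_ge_zero order_trans power2_abs power_mono)
  also have "\<dots> = (R\<^sup>2 * d\<^sup>2 * T) * T" by (simp add: power2_eq_square)
  also have "\<dots> \<le> (R\<^sup>2 * d\<^sup>2 * T) * N"
    by (rule mult_left_mono[OF \<open>T \<le> N\<close>]) (simp add: \<open>0 \<le> T\<close>)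
  finally have var: "beta * (\<Sum>s\<in>UNIV. p s * h s)\<^sup>2 \<le> beta * ((R\<^sup>2 * d\<^sup>2 * T) * N)"
    using \<open>0 \<le> beta\<close> by (rule mult_left_mono)
  show ?thesis
    using mean var unfolding T_def[symmetric] by (simp add: power2_eq_square algebra_simps)
qed

lemma deviation_mass_nonneg:
  assumes "valid_game A P" "is_joint_policy A mu"
  shows "0 \<le> deviation_mass mu s al"
proof -
  have "finite (A k)" for k using assms(1) unfolding valid_game_def by blast
  then show ?thesis
    unfolding deviation_mass_def by (intro sum_nonneg) (simp add: policy_le_1[OF joint_policyD[OF assms(2)]])
qed

lemma deviation_mass_le_card:
  fixes mu :: "'i::finite \<Rightarrow> 's \<Rightarrow> 'a \<Rightarrow> real"
  assumes "is_joint_policy A mu"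
  shows "deviation_mass mu s al \<le> real CARD('i)"
  unfolding deviation_mass_def
  using sum_mono[of UNIV "\<lambda>k. 1 - mu k s (al k)" "\<lambda>_. 1"] policy_nonneg[OF joint_policyD[OF assms]]
  by simp

lemma deviation_mass_mix:
  assumes "deterministic_at mustar s al"
  shows "deviation_mass (\<lambda>i. mix d (mustar i) (mu i)) s al = d * deviation_mass mu s al"
  using assms unfolding deviation_mass_def deterministic_at_def mix_def
  by (simp add: sum_distrib_left algebra_simps)

lemma deviation_mass_pos:
  assumes valid: "valid_game A P" and mu: "is_joint_policy A mu" and mustar: "is_joint_policy A mustar"
    and al: "al \<in> joint_actions A" and det: "deterministic_at mustar s al"
    and ne: "mu k s \<noteq> mustar k s"
  shows "0 < deviation_mass mu s al"
proof -
  have fin: "finite (A k)" using valid unfolding valid_game_def by blast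
  have "mu k s (al k) \<noteq> 1"
  proof
    assume "mu k s (al k) = 1"
    then have "mu k s = mustar k s"
      using policy_eq_indicator[OF joint_policyD[OF mu] fin joint_actionsD[OF al]] det
      unfolding deterministic_at_def by auto
    with ne show False ..
  qed
  then have "0 < 1 - mu k s (al k)" using policy_le_1[OF joint_policyD[OF mu] fin, of s "al k"] by simp
  also have "1 - mu k s (al k) \<le> deviation_mass mu s al"
    unfolding deviation_mass_def
    using policy_le_1[OF joint_policyD[OF mu]] valid unfolding valid_game_def
    by (intro member_le_sum) simp_all
  finally show ?thesis .
qed

context ergodic_game
begin

lemma Jmv_mixture_bound:
  fixes mustar mu :: "'i \<Rightarrow> 's \<Rightarrow> 'a \<Rightarrow> real"
  assumes mustar: "is_joint_policy A mustar" and mu: "is_joint_policy A mu" and beta: "0 \<le> beta"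
    and form: "Jmv_difference_form A P r beta mustar qg qr"
    and al: "\<And>s. al s \<in> joint_actions A" and det: "\<And>s. deterministic_at mustar s (al s)"
    and unilateral: "\<And>s k b. b \<in> A k \<Longrightarrow> b \<noteq> al s k \<Longrightarrow> qg s ((al s)(k := b)) - qg s (al s) \<le> c"
    and "c < 0"
    and Qg: "\<And>s a. a \<in> joint_actions A \<Longrightarrow> \<bar>qg s a\<bar> \<le> Qg"
    and Qr: "\<And>s a. a \<in> joint_actions A \<Longrightarrow> \<bar>qr s a\<bar> \<le> Qr"
    and "0 \<le> d" "d \<le> 1"
  defines "x \<equiv> \<lambda>i. mix d (mustar i) (mu i)" and "N \<equiv> real CARD('i)"
  shows "Jmv A P r beta x - Jmv A P r beta mustar
           \<le> d * (\<Sum>s\<in>UNIV. stat_dist A P x s * deviation_mass mu s (al s))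
               * (c + d * (N * ((2 * Qg - c * N) + beta * (2 * Qr)\<^sup>2)))"
proof -
  have x: "is_joint_policy A x"
    unfolding x_def using is_joint_policy_mix[OF mustar mu] \<open>0 \<le> d\<close> \<open>d \<le> 1\<close> by blast
  have mass_x: "deviation_mass x s (al s) = d * deviation_mass mu s (al s)" for s
    unfolding x_def by (rule deviation_mass_mix[OF det])
  have "0 \<le> Qg" using Qg[OF al] by (meson abs_ge_zero order_trans)
  moreover have "c * N \<le> 0" unfolding N_def using \<open>c < 0\<close> by (simp add: mult_nonpos_nonneg)
  ultimately have "0 \<le> 2 * Qg - c * N" by linarith
  have "Jmv A P r beta x - Jmv A P r beta mustar
      = (\<Sum>s\<in>UNIV. stat_dist A P x s * advantage A qg mustar x s)
        + beta * (\<Sum>s\<in>UNIV. stat_dist A P x s * advantage A qr mustar x s)\<^sup>2"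
    using form x unfolding Jmv_difference_form_def by blast
  also have "\<dots> \<le> d * (\<Sum>s\<in>UNIV. stat_dist A P x s * deviation_mass mu s (al s))
               * (c + d * (N * ((2 * Qg - c * N) + beta * (2 * Qr)\<^sup>2)))"
  proof (rule weighted_mean_variance_bound[OF less_imp_le[OF stat_dist_pos[OF x]] stat_dist_sum_eq_1[OF x]])
    show "0 \<le> deviation_mass mu s (al s)" for s by (rule deviation_mass_nonneg[OF valid mu])
    show "deviation_mass mu s (al s) \<le> N" for s unfolding N_def by (rule deviation_mass_le_card[OF mu])
    show "advantage A qg mustar x s
        \<le> c * (d * deviation_mass mu s (al s)) + (2 * Qg - c * N) * (d * deviation_mass mu s (al s))\<^sup>2" for s
      unfolding N_def mass_x[symmetric]
      by (rule advantage_le_deviation_mass[OF valid x al det]) (simp_all add: unilateral Qg \<open>c < 0\<close>)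
    show "\<bar>advantage A qr mustar x s\<bar> \<le> 2 * Qr * (d * deviation_mass mu s (al s))" for s
      unfolding mass_x[symmetric] by (rule advantage_abs_le_deviation_mass[OF valid x al det]) (simp add: Qr)
  qed (use \<open>0 \<le> 2 * Qg - c * N\<close> beta \<open>0 \<le> d\<close> in auto)
  finally show ?thesis .
qed

text \<open>Every unilateral deviation from the deterministic \<open>\<mu>\<^sup>*\<close> loses at least \<open>-c > 0\<close>, so along a
  mixture with weight \<open>\<delta>\<close> the objective drops to first order in \<open>\<delta>\<close>, uniformly in the direction,
  while all other terms are of order \<open>\<delta>\<^sup>2\<close>.\<close>

lemma strict_local_max_of_deterministic:
  fixes mustar :: "'i \<Rightarrow> 's \<Rightarrow> 'a \<Rightarrow> real"
  assumes mustar: "is_joint_policy A mustar" and beta: "0 \<le> beta"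
    and form: "Jmv_difference_form A P r beta mustar qg qr"
    and al: "\<And>s. al s \<in> joint_actions A" and det: "\<And>s. deterministic_at mustar s (al s)"
    and unilateral: "\<And>s k b. b \<in> A k \<Longrightarrow> b \<noteq> al s k \<Longrightarrow> qg s ((al s)(k := b)) - qg s (al s) \<le> c"
    and "c < 0"
  shows "strict_local_max A P r beta mustar"
proof -
  obtain Qg where Qg: "\<And>s a. a \<in> joint_actions A \<Longrightarrow> \<bar>qg s a\<bar> \<le> Qg"
    using bounded_on_joint_actions[OF finite_joint_actions[OF valid]] by blast
  obtain Qr where Qr: "\<And>s a. a \<in> joint_actions A \<Longrightarrow> \<bar>qr s a\<bar> \<le> Qr"
    using bounded_on_joint_actions[OF finite_joint_actions[OF valid]] by blast
  define N where "N = real CARD('i)"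
  define K where "K = N * ((2 * Qg - c * N) + beta * (2 * Qr)\<^sup>2)"
  have "0 \<le> Qg" using Qg[OF al] by (meson abs_ge_zero order_trans)
  moreover have "c * N \<le> 0" unfolding N_def using \<open>c < 0\<close> by (simp add: mult_nonpos_nonneg)
  ultimately have "0 \<le> K"
    unfolding K_def using beta by (intro mult_nonneg_nonneg add_nonneg_nonneg) (simp_all add: N_def)
  show ?thesis
    unfolding strict_local_max_def
  proof (intro exI conjI allI impI)
    show "0 < min 1 (- c / (K + 1))" "min 1 (- c / (K + 1)) \<le> 1"
      using \<open>c < 0\<close> \<open>0 \<le> K\<close> by (auto simp: divide_neg_pos)
    fix d :: real and mu
    assume "0 < d \<and> d \<le> min 1 (- c / (K + 1))" and "is_joint_policy A mu \<and> mu \<noteq> mustar"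
    then have "0 < d" "d \<le> 1" "d \<le> - c / (K + 1)" and mu: "is_joint_policy A mu" "mu \<noteq> mustar"
      by auto
    then have "d * (K + 1) \<le> - c"
      by (subst (asm) pos_le_divide_eq) (use \<open>0 \<le> K\<close> in auto)
    define x where "x = (\<lambda>i. mix d (mustar i) (mu i))"
    have x: "is_joint_policy A x"
      unfolding x_def using is_joint_policy_mix[OF mustar mu(1)] \<open>0 < d\<close> \<open>d \<le> 1\<close> by simp
    obtain k s where "mu k s \<noteq> mustar k s" using mu(2) by (auto simp: fun_eq_iff)
    then have "0 < deviation_mass mu s (al s)" by (rule deviation_mass_pos[OF valid mu(1) mustar al det])
    then have "0 < stat_dist A P x s * deviation_mass mu s (al s)" using stat_dist_pos[OF x] by simp
    also have "\<dots> \<le> (\<Sum>s\<in>UNIV. stat_dist A P x s * deviation_mass mu s (al s))"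
      by (rule member_le_sum)
        (simp_all add: deviation_mass_nonneg[OF valid mu(1)] less_imp_le[OF stat_dist_pos[OF x]])
    finally have "0 < d * (\<Sum>s\<in>UNIV. stat_dist A P x s * deviation_mass mu s (al s))"
      using \<open>0 < d\<close> by simp
    moreover have "c + d * K < 0" using \<open>d * (K + 1) \<le> - c\<close> \<open>0 < d\<close> by (simp add: algebra_simps)
    ultimately have "Jmv A P r beta x - Jmv A P r beta mustar < 0"
      using Jmv_mixture_bound[OF mustar mu(1) beta form al det unilateral \<open>c < 0\<close> Qg Qr, of d]
        \<open>0 < d\<close> \<open>d \<le> 1\<close> mult_pos_neg unfolding x_def K_def N_def by fastforce
    then show "Jmv A P r beta mustar > Jmv A P r beta (\<lambda>i. mix d (mustar i) (mu i))"
      unfolding x_def by simp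
  qed
qed

lemma strict_local_NE_imp_strict_local_max:
  assumes mustar: "is_joint_policy A mustar" and beta: "0 \<le> beta"
    and NE: "strict_local_NE A P r beta mustar"
  shows "strict_local_max A P r beta mustar"
proof -
  obtain qg qr where form: "Jmv_difference_form A P r beta mustar qg qr"
    using Jmv_difference_form_exists[OF mustar] .
  define al where "al s i = (SOME b. b \<in> A i \<and> mustar i s b = 1)" for s i
  have al_prop: "al s i \<in> A i \<and> mustar i s (al s i) = 1" for s i
    unfolding al_def using strict_local_NE_deterministic[OF mustar beta form NE] by (rule someI2_bex) auto
  have al: "al s \<in> joint_actions A" for s
    using al_prop unfolding joint_actions_def by (auto simp: PiE_iff)
  have det: "deterministic_at mustar s (al s)" for s
    using policy_eq_indicator[OF joint_policyD[OF mustar] finite_actions al_prop[THEN conjunct1]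
        al_prop[THEN conjunct2]]
    unfolding deterministic_at_def by blast
  define S where "S = (SIGMA s:UNIV. SIGMA k:UNIV. A k - {al s k})"
  define loss where "loss = (\<lambda>(s, k, b). qg s ((al s)(k := b)) - qg s (al s))"
  have "finite S" unfolding S_def by (intro finite_SigmaI) (simp_all add: finite_actions)
  moreover have "loss x < 0" if "x \<in> S" for x
    using that strict_local_NE_unilateral_loss[OF mustar beta form NE det al]
    unfolding S_def loss_def by force
  ultimately obtain c where "c < 0" and c: "\<And>x. x \<in> S \<Longrightarrow> loss x \<le> c"
    using finite_uniformly_negative[of S loss] by blast
  have "qg s ((al s)(k := b)) - qg s (al s) \<le> c" if "b \<in> A k" "b \<noteq> al s k" for s k b
    using c[of "(s, k, b)"] that unfolding S_def loss_def by simp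
  then show ?thesis
    by (rule strict_local_max_of_deterministic[OF mustar beta form al det _ \<open>c < 0\<close>])
qed

lemma strict_local_max_imp_strict_local_NE:
  assumes mustar: "is_joint_policy A mustar" and max: "strict_local_max A P r beta mustar"
  shows "strict_local_NE A P r beta mustar"
proof -
  obtain db where db: "0 < db" "db \<le> 1" and max_db: "\<And>d mu. 0 < d \<and> d \<le> db \<Longrightarrow>
      is_joint_policy A mu \<and> mu \<noteq> mustar \<Longrightarrow>
      Jmv A P r beta mustar > Jmv A P r beta (\<lambda>i. mix d (mustar i) (mu i))"
    using max unfolding strict_local_max_def by blast
  have "Jmv A P r beta mustar > Jmv A P r beta (mustar(i := mix d (mustar i) m))"
    if "0 < d \<and> d \<le> db" "is_policy (A i) m \<and> m \<noteq> mustar i" for d i m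
  proof -
    have "(\<lambda>j. mix d (mustar j) ((mustar(i := m)) j)) = mustar(i := mix d (mustar i) m)"
      by (auto simp: fun_eq_iff mix_self)
    moreover have "is_joint_policy A (mustar(i := m)) \<and> mustar(i := m) \<noteq> mustar"
      using joint_policy_upd[OF mustar] that(2) by (auto simp: fun_eq_iff)
    ultimately show ?thesis using max_db[OF that(1)] by metis
  qed
  then show ?thesis unfolding strict_local_NE_def using db by blast
qed

end

theorem theorem5:
  fixes A :: "'i::finite \<Rightarrow> 'a set"
    and P :: "'s::finite \<Rightarrow> ('i \<Rightarrow> 'a) \<Rightarrow> 's \<Rightarrow> real"
    and r :: "'s \<Rightarrow> ('i \<Rightarrow> 'a) \<Rightarrow> real"
    and beta :: real
    and mustar :: "'i \<Rightarrow> 's \<Rightarrow> 'a \<Rightarrow> real"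
  assumes game: "valid_game A P"
    and ergodic: "\<And>mu. is_joint_policy A mu \<Longrightarrow> ergodic_chain (chain A P mu)"
    and beta: "beta \<ge> 0"
    and mustar: "is_joint_policy A mustar"
  shows "strict_local_NE A P r beta mustar \<longleftrightarrow> strict_local_max A P r beta mustar"
proof -
  interpret ergodic_game A P using game ergodic by unfold_locales
  show ?thesis
    using strict_local_NE_imp_strict_local_max[OF mustar beta]
      strict_local_max_imp_strict_local_NE[OF mustar] by blast
qed

end
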